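(* Let $r\ge1$. For a regular semisimple $Z=\mathrm{diag}(\gamma_1,\dots,\gamma_{r+1})$ and $\Lambda(z)=\prod_{i=1}^{r+1}(z-a_i)$ with distinct roots, let ${\rm Fun}(r{\rm Op}_Z^{\Lambda})=\mathbb{C}(\gamma_i,p_i,a_i)/\mathrm{Wr}$, where $\mathrm{Wr}$ is the relation (coefficientwise in $z$) $$\det_{1\le i,j\le r+1}\big[(\gamma_i+\partial_z)^{j-1}(z-p_i)\big]=\prod_{i<j}(\gamma_j-\gamma_i)\cdot\prod_{i=1}^{r+1}(z-a_i).$$ Set $Z'=\mathrm{diag}(a_1,\dots,a_{r+1})$ and $\Lambda'(z)=\prod_{i=1}^{r+1}(z-\gamma_i)$, and define ${\rm Fun}(r{\rm Op}_{Z'}^{\Lambda'})=\mathbb{C}(a_i,p'_i,\gamma_i)/\mathrm{Wr}'$ with $\mathrm{Wr}'$ the same relation with the roles of $(\gamma_i,p_i,a_i)$ replaced by $(a_i,p'_i,\gamma_i)$. Then $${\rm Fun}(r{\rm Op}_Z^{\Lambda})\cong{\rm Fun}(r{\rm Op}_{Z'}^{\Lambda'}).$$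
   Context: ${\rm Fun}(r{\rm Op}_Z^{\Lambda})$ is the algebra of functions on the space of canonical rationally $Z$-twisted Miura $SL(r+1)$-opers on $\mathbb{P}^1$: the oper connection is gauge equivalent to the constant connection $\partial_z+Z$, $Z$ is regular semisimple, the section of the line subbundle has components $s_i(z)=z-p_i$, and the only regular singularities are the distinct roots of $\Lambda$, equal (up to the constant Vandermonde factor) to the twisted Wronskian $\det[(\gamma_i+\partial_z)^{j-1}s_i]$. The dual space uses twist $Z'$ and singularity polynomial $\Lambda'$, i.e. twist parameters and singularity positions are interchanged. *)

theory Defs
  imports "Jordan_Normal_Form.Determinant" "HOL-Computational_Algebra.Polynomial"
begin

text \<open>Coordinates of the ambient affine space: twist parameters G i (gamma_i),
  Miura-oper section roots P i (p_i), singularity positions A i (a_i), i = 0..r.\<close>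
datatype var = G nat | P nat | A nat

definition twisted_der_pow :: "complex \<Rightarrow> nat \<Rightarrow> complex poly \<Rightarrow> complex poly" where
  "twisted_der_pow c j q = ((\<lambda>f. smult c f + pderiv f) ^^ j) q"

definition twisted_wronskian :: "nat \<Rightarrow> (nat \<Rightarrow> complex) \<Rightarrow> (nat \<Rightarrow> complex) \<Rightarrow> complex poly" where
  "twisted_wronskian r \<gamma> p =
     det (mat (Suc r) (Suc r) (\<lambda>(i, j). twisted_der_pow (\<gamma> i) j [:- p i, 1:]))"

definition Wr :: "nat \<Rightarrow> (nat \<Rightarrow> complex) \<Rightarrow> (nat \<Rightarrow> complex) \<Rightarrow> (nat \<Rightarrow> complex) \<Rightarrow> bool" where
  "Wr r \<gamma> p a \<longleftrightarrow>
     twisted_wronskian r \<gamma> p =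
       smult (\<Prod>j\<in>{..r}. \<Prod>i\<in>{..<j}. \<gamma> j - \<gamma> i) (\<Prod>i\<in>{..r}. [:- a i, 1:])"

text \<open>Coordinates that are actually used (i \<le> r); the others are normalised to 0.\<close>
fun used_var :: "nat \<Rightarrow> var \<Rightarrow> bool" where
  "used_var r (G i) = (i \<le> r)"
| "used_var r (P i) = (i \<le> r)"
| "used_var r (A i) = (i \<le> r)"

text \<open>Space of canonical rationally Z-twisted Miura SL(r+1)-opers with
  Z = diag(gamma) regular semisimple and Lambda = prod (z - a_i) with distinct roots.\<close>
definition rOp :: "nat \<Rightarrow> (var \<Rightarrow> complex) set" where
  "rOp r = {v. (\<forall>k. \<not> used_var r k \<longrightarrow> v k = 0)
              \<and> inj_on (\<lambda>i. v (G i)) {..r} \<and> inj_on (\<lambda>i. v (A i)) {..r}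
              \<and> Wr r (\<lambda>i. v (G i)) (\<lambda>i. v (P i)) (\<lambda>i. v (A i))}"

text \<open>Dual space: twist Z' = diag(a), singularities at the gamma_i; here the
  P-coordinates are the dual section roots p'_i.\<close>
definition rOp_dual :: "nat \<Rightarrow> (var \<Rightarrow> complex) set" where
  "rOp_dual r = {v. (\<forall>k. \<not> used_var r k \<longrightarrow> v k = 0)
              \<and> inj_on (\<lambda>i. v (A i)) {..r} \<and> inj_on (\<lambda>i. v (G i)) {..r}
              \<and> Wr r (\<lambda>i. v (A i)) (\<lambda>i. v (P i)) (\<lambda>i. v (G i))}"

inductive_set polyfun :: "((var \<Rightarrow> complex) \<Rightarrow> complex) set" where
  const: "(\<lambda>v. c) \<in> polyfun"
| coord: "(\<lambda>v. v k) \<in> polyfun"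
| add: "f \<in> polyfun \<Longrightarrow> g \<in> polyfun \<Longrightarrow> (\<lambda>v. f v + g v) \<in> polyfun"
| mult: "f \<in> polyfun \<Longrightarrow> g \<in> polyfun \<Longrightarrow> (\<lambda>v. f v * g v) \<in> polyfun"

definition restr :: "(var \<Rightarrow> complex) set \<Rightarrow> ((var \<Rightarrow> complex) \<Rightarrow> complex) \<Rightarrow> (var \<Rightarrow> complex) \<Rightarrow> complex" where
  "restr S f = (\<lambda>v. if v \<in> S then f v else 0)"

definition Fun :: "(var \<Rightarrow> complex) set \<Rightarrow> ((var \<Rightarrow> complex) \<Rightarrow> complex) set" where
  "Fun S = {f. (\<forall>v. v \<notin> S \<longrightarrow> f v = 0)
              \<and> (\<exists>g\<in>polyfun. \<exists>h\<in>polyfun. \<forall>v\<in>S. h v \<noteq> 0 \<and> f v = g v / h v)}"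

definition Fun_iso :: "(var \<Rightarrow> complex) set \<Rightarrow> (var \<Rightarrow> complex) set
    \<Rightarrow> (((var \<Rightarrow> complex) \<Rightarrow> complex) \<Rightarrow> ((var \<Rightarrow> complex) \<Rightarrow> complex)) \<Rightarrow> nat \<Rightarrow> bool" where
  "Fun_iso S S' T r \<longleftrightarrow>
     bij_betw T (Fun S) (Fun S')
     \<and> (\<forall>f\<in>Fun S. \<forall>g\<in>Fun S. T (\<lambda>v. f v + g v) = (\<lambda>v. T f v + T g v))
     \<and> (\<forall>f\<in>Fun S. \<forall>g\<in>Fun S. T (\<lambda>v. f v * g v) = (\<lambda>v. T f v * T g v))
     \<and> (\<forall>c. T (restr S (\<lambda>v. c)) = restr S' (\<lambda>v. c))
     \<and> (\<forall>i\<le>r. T (restr S (\<lambda>v. v (G i))) = restr S' (\<lambda>v. v (G i)))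
     \<and> (\<forall>i\<le>r. T (restr S (\<lambda>v. v (A i))) = restr S' (\<lambda>v. v (A i)))"

end

(*
  The twisted Wronskian of the sections z - p_i factors as
  Vandermonde(gamma) * det (z - X), where X = diag p - D and D is the matrix that differentiates
  polynomials of degree <= r given by their values at the nodes gamma_i; up to a diagonal
  conjugation, X is the Lax matrix of the rational Calogero-Moser system with positions gamma and
  momenta p.  So the relation Wr says exactly that X has the eigenvalues a_i.  Since
  [X, diag gamma] = (rank one) - 1, in an eigenbasis U of X the matrix Y = U^-1 diag gamma U
  satisfies (a_i - a_k) Y_ik = f_i h_k - delta_ik.  This makes the Lax matrix with positions a and
  momenta p'_i = Y_ii + D'_ii conjugate to Y^T, hence to diag gamma: the triple (a, p', gamma)
  satisfies the dual relation, and the same construction applied to it returns p.  The p'_i are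
  rational in (gamma, p, a), being traces of diag gamma against the spectral projectors
  prod_{m <> i} (X - a_m) / (a_i - a_m), so p |-> p' is a birational isomorphism fixing gamma and
  a, and pulling functions back along it is the required isomorphism of algebras.
*)

theory Submission
  imports Defs "Jordan_Normal_Form.Char_Poly"
begin

section \<open>Diagonal and Vandermonde matrices\<close>

lemma index_mult_mat_sum:
  assumes "M \<in> carrier_mat n m" "N \<in> carrier_mat m k" "i < n" "j < k"
  shows "(M * N) $$ (i,j) = (\<Sum>l<m. M $$ (i,l) * N $$ (l,j))"
  using assms by (auto simp: scalar_prod_def lessThan_atLeast0 intro!: sum.cong)

lemma index_mult_mat_vec_sum:
  assumes "M \<in> carrier_mat n m" "v \<in> carrier_vec m" "i < n"
  shows "(M *\<^sub>v v) $ i = (\<Sum>l<m. M $$ (i,l) * v $ l)"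
  using assms by (auto simp: scalar_prod_def lessThan_atLeast0 intro!: sum.cong)

lemma index_mat_diag [simp]:
  "i < n \<Longrightarrow> j < n \<Longrightarrow> mat_diag n d $$ (i,j) = (if i = j then d i else 0)"
  by (simp add: mat_diag_def)

lemma mat_diag_dims [simp]: "dim_row (mat_diag n d) = n" "dim_col (mat_diag n d) = n"
  by (simp_all add: mat_diag_def)

lemma transpose_mat_diag [simp]: "transpose_mat (mat_diag n d) = mat_diag n d"
  by (rule eq_matI) auto

lemma mat_diag_mult_inverse:
  assumes "\<And>k. k < n \<Longrightarrow> e k \<noteq> (0 :: 'a :: field)"
  shows "mat_diag n e * mat_diag n (\<lambda>k. 1 / e k) = 1\<^sub>m n"
    and "mat_diag n (\<lambda>k. 1 / e k) * mat_diag n e = 1\<^sub>m n"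
  using assms by (auto intro!: eq_matI)

lemma upper_triangular_mat_diag: "upper_triangular (mat_diag n d)"
  by (simp add: upper_triangular_def)

lemma diag_mat_mat_diag: "diag_mat (mat_diag n d) = map d [0..<n]"
  by (simp add: diag_mat_def)

lemma det_mat_diag: "det (mat_diag n d) = (\<Prod>i<n. d i :: 'a :: comm_ring_1)"
  by (simp add: det_upper_triangular[OF upper_triangular_mat_diag mat_diag_dim]
      diag_mat_mat_diag prod.distinct_set_conv_list[symmetric] atLeast_upt)

lemma char_poly_mat_diag: "char_poly (mat_diag n d) = (\<Prod>i<n. [:- d i, 1:])"
  by (simp add: char_poly_upper_triangular[OF mat_diag_dim upper_triangular_mat_diag]
      diag_mat_mat_diag prod.distinct_set_conv_list[symmetric] atLeast_upt)

lemma conj_mat_diag_entry: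
  assumes "U \<in> carrier_mat n n" "Ui \<in> carrier_mat n n" "k < n" "l < n"
  shows "(U * mat_diag n e * Ui) $$ (k,l) = (\<Sum>t<n. U $$ (k,t) * e t * Ui $$ (t,l))"
proof -
  have "(U * mat_diag n e * Ui) $$ (k,l) = (\<Sum>t<n. (U * mat_diag n e) $$ (k,t) * Ui $$ (t,l))"
    by (rule index_mult_mat_sum[OF mult_carrier_mat[OF assms(1) mat_diag_dim] assms(2-4)])
  also have "\<dots> = (\<Sum>t<n. U $$ (k,t) * e t * Ui $$ (t,l))"
    using assms(1,3) by (intro sum.cong refl) (simp add: mat_diag_mult_right[OF assms(1)])
  finally show ?thesis .
qed

lemma conj_mat_diag_mult:
  fixes U :: "'a :: comm_ring_1 mat"
  assumes U: "U \<in> carrier_mat n n" and Ui: "Ui \<in> carrier_mat n n" and UiU: "Ui * U = 1\<^sub>m n"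
  shows "(U * mat_diag n d * Ui) * (U * mat_diag n e * Ui) = U * mat_diag n (\<lambda>k. d k * e k) * Ui"
proof -
  have "(U * mat_diag n d * Ui) * (U * mat_diag n e * Ui) = U * (mat_diag n d * ((Ui * U) * (mat_diag n e * Ui)))"
    using U Ui by (simp add: assoc_mult_mat[of _ n n _ n _ n] mult_carrier_mat[of _ n n _ n])
  also have "\<dots> = U * (mat_diag n d * (mat_diag n e * Ui))"
    using U Ui by (simp add: UiU)
  also have "\<dots> = U * (mat_diag n d * mat_diag n e * Ui)"
    by (simp only: assoc_mult_mat[OF mat_diag_dim mat_diag_dim Ui])
  finally show ?thesis
    using U Ui by (simp add: assoc_mult_mat[of _ n n _ n _ n] mult_carrier_mat[of _ n n _ n])
qed

lemma conj_mat_diag_smult: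
  fixes U :: "'a :: comm_ring_1 mat"
  assumes U: "U \<in> carrier_mat n n" and Ui: "Ui \<in> carrier_mat n n"
  shows "c \<cdot>\<^sub>m (U * mat_diag n d * Ui) = U * mat_diag n (\<lambda>k. c * d k) * Ui"
proof -
  have "mat_diag n (\<lambda>k. c * d k) = c \<cdot>\<^sub>m mat_diag n d" by (rule eq_matI) auto
  then have "U * mat_diag n (\<lambda>k. c * d k) * Ui = c \<cdot>\<^sub>m (U * mat_diag n d) * Ui"
    using mult_smult_distrib[OF U mat_diag_dim] by simp
  also have "\<dots> = c \<cdot>\<^sub>m (U * mat_diag n d * Ui)"
    by (rule mult_smult_assoc_mat[OF mult_carrier_mat[OF U mat_diag_dim] Ui])
  finally show ?thesis ..
qed

lemma conj_mat_diag_minus_smult_one: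
  fixes U :: "'a :: comm_ring_1 mat"
  assumes U: "U \<in> carrier_mat n n" and Ui: "Ui \<in> carrier_mat n n" and UUi: "U * Ui = 1\<^sub>m n"
  shows "U * mat_diag n a * Ui - c \<cdot>\<^sub>m 1\<^sub>m n = U * mat_diag n (\<lambda>k. a k - c) * Ui"
proof (rule eq_matI)
  fix k l assume "k < dim_row (U * mat_diag n (\<lambda>k. a k - c) * Ui)" "l < dim_col (U * mat_diag n (\<lambda>k. a k - c) * Ui)"
  then have kl: "k < n" "l < n" using U Ui by auto
  have "(\<Sum>t<n. U $$ (k,t) * Ui $$ (t,l)) = (U * Ui) $$ (k,l)"
    by (rule index_mult_mat_sum[OF U Ui kl, symmetric])
  then have one: "(\<Sum>t<n. U $$ (k,t) * Ui $$ (t,l)) = (if k = l then 1 else 0)"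
    using UUi kl by simp
  have "(U * mat_diag n a * Ui - c \<cdot>\<^sub>m 1\<^sub>m n) $$ (k,l) =
      (U * mat_diag n a * Ui) $$ (k,l) - c * (if k = l then 1 else 0)"
    using U Ui kl by simp
  also have "\<dots> = (\<Sum>t<n. U $$ (k,t) * (a t - c) * Ui $$ (t,l))"
    unfolding conj_mat_diag_entry[OF U Ui kl] one[symmetric]
    by (simp add: algebra_simps sum_subtractf sum_distrib_left)
  also have "\<dots> = (U * mat_diag n (\<lambda>k. a k - c) * Ui) $$ (k,l)"
    by (rule conj_mat_diag_entry[OF U Ui kl, symmetric])
  finally show "(U * mat_diag n a * Ui - c \<cdot>\<^sub>m 1\<^sub>m n) $$ (k,l) = (U * mat_diag n (\<lambda>k. a k - c) * Ui) $$ (k,l)" .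
qed (use U Ui in auto)

lemma mult_rank_one_mult:
  assumes M: "M \<in> carrier_mat n n" and N: "N \<in> carrier_mat n n" and ik: "i < n" "k < n"
  shows "(M * mat n n (\<lambda>(m,l). u m * v l) * N) $$ (i,k) =
    (\<Sum>m<n. M $$ (i,m) * u m) * (\<Sum>l<n. v l * N $$ (l,k))"
proof -
  let ?R = "mat n n (\<lambda>(m,l). u m * v l)"
  have MR: "(M * ?R) $$ (i,l) = (\<Sum>m<n. M $$ (i,m) * u m) * v l" if "l < n" for l
  proof -
    have "(M * ?R) $$ (i,l) = (\<Sum>m<n. M $$ (i,m) * ?R $$ (m,l))"
      by (rule index_mult_mat_sum[OF M mat_carrier ik(1) that])
    also have "\<dots> = (\<Sum>m<n. M $$ (i,m) * u m * v l)"
      using that by (intro sum.cong) (auto simp: mult.assoc)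
    finally show ?thesis by (simp add: sum_distrib_right)
  qed
  have "(M * ?R * N) $$ (i,k) = (\<Sum>l<n. (M * ?R) $$ (i,l) * N $$ (l,k))"
    by (rule index_mult_mat_sum[OF mult_carrier_mat[OF M mat_carrier] N ik])
  also have "\<dots> = (\<Sum>l<n. (\<Sum>m<n. M $$ (i,m) * u m) * v l * N $$ (l,k))"
    by (intro sum.cong) (simp_all add: MR)
  finally show ?thesis by (simp add: sum_distrib_left mult.assoc)
qed

definition vandermonde_mat :: "nat \<Rightarrow> (nat \<Rightarrow> 'a :: comm_ring_1) \<Rightarrow> 'a mat" where
  "vandermonde_mat n g = mat n n (\<lambda>(i,j). g i ^ j)"

lemma vandermonde_mat_carrier [simp]: "vandermonde_mat n g \<in> carrier_mat n n"
  by (simp add: vandermonde_mat_def)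

lemma vandermonde_mat_dims [simp]: "dim_row (vandermonde_mat n g) = n" "dim_col (vandermonde_mat n g) = n"
  by (simp_all add: vandermonde_mat_def)

lemma det_vandermonde_mat_Suc:
  "det (vandermonde_mat (Suc n) g) = (\<Prod>i<n. g (Suc i) - g 0) * det (vandermonde_mat n (g \<circ> Suc))"
proof -
  define M where "M = vandermonde_mat (Suc n) g"
  \<comment> \<open>\<open>M * E\<close> subtracts \<open>g 0\<close> times column \<open>j - 1\<close> from column \<open>j\<close>\<close>
  define E :: "'a mat" where
    "E = mat (Suc n) (Suc n) (\<lambda>(k,j). if k = j then 1 else if Suc k = j then - g 0 else 0)"
  have M: "M \<in> carrier_mat (Suc n) (Suc n)" and E: "E \<in> carrier_mat (Suc n) (Suc n)"
    by (simp_all add: M_def E_def)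
  have ME: "M * E \<in> carrier_mat (Suc n) (Suc n)" using M E by simp
  have "det E = prod_list (diag_mat E)"
    by (rule det_upper_triangular[OF _ E]) (auto simp: upper_triangular_def E_def)
  also have "diag_mat E = map (\<lambda>_. 1) [0..<Suc n]"
    unfolding diag_mat_def E_def by (intro map_cong) auto
  finally have detE: "det E = 1" by (simp add: map_replicate_const)
  have entry: "(M * E) $$ (i,j) = (if j = 0 then 1 else (g i - g 0) * g i ^ (j - 1))"
    if "i < Suc n" "j < Suc n" for i j
  proof -
    have "(M * E) $$ (i,j) = (\<Sum>l<Suc n. M $$ (i,l) * E $$ (l,j))"
      by (rule index_mult_mat_sum[OF M E that])
    also have "\<dots> = (\<Sum>l<Suc n. (if l = j then g i ^ l else 0) + (if Suc l = j then - g 0 * g i ^ l else 0))"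
      using that by (intro sum.cong) (auto simp: M_def E_def vandermonde_mat_def)
    also have "\<dots> = g i ^ j - (if j = 0 then 0 else g 0 * g i ^ (j - 1))"
      using that by (cases j) (auto simp: sum.distrib)
    finally show ?thesis by (cases j) (simp_all add: algebra_simps)
  qed
  have minor: "mat_delete (M * E) 0 0 =
      mat_diag n (\<lambda>i. g (Suc i) - g 0) * vandermonde_mat n (g \<circ> Suc)"
    by (rule eq_matI)
      (use M E in \<open>auto simp: mat_delete_def entry mat_diag_mult_left[of _ n n] vandermonde_mat_def simp del: index_mult_mat(1)\<close>)
  have "det M = det (M * E)" using det_mult[OF M E] detE by simp
  also have "\<dots> = (\<Sum>j<Suc n. (M * E) $$ (0,j) * cofactor (M * E) 0 j)"
    by (rule laplace_expansion_row[OF ME]) simp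
  also have "\<dots> = cofactor (M * E) 0 0"
    by (subst sum.lessThan_Suc_shift) (simp add: entry)
  also have "\<dots> = det (mat_delete (M * E) 0 0)" by (simp add: cofactor_def)
  also have "\<dots> = (\<Prod>i<n. g (Suc i) - g 0) * det (vandermonde_mat n (g \<circ> Suc))"
    unfolding minor by (simp add: det_mult[of _ n] det_mat_diag)
  finally show ?thesis unfolding M_def .
qed

lemma det_vandermonde_mat: "det (vandermonde_mat n g) = (\<Prod>j<n. \<Prod>i<j. g j - g i)"
proof (induction n arbitrary: g)
  case 0
  show ?case by (simp add: vandermonde_mat_def)
next
  case (Suc n)
  have "(\<Prod>j<Suc n. \<Prod>i<j. g j - g i) = (\<Prod>j<n. (g (Suc j) - g 0) * (\<Prod>i<j. g (Suc j) - g (Suc i)))"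
    by (simp add: prod.lessThan_Suc_shift del: prod.lessThan_Suc)
  then show ?case
    by (simp add: det_vandermonde_mat_Suc Suc prod.distrib)
qed

lemma vandermonde_nonzero:
  fixes r :: nat
  assumes "inj_on \<gamma> {..r}"
  shows "(\<Prod>j\<le>r. \<Prod>i<j. \<gamma> j - \<gamma> i) \<noteq> (0 :: 'a :: field)"
proof -
  have "\<gamma> j \<noteq> \<gamma> i" if "j \<le> r" "i < j" for i j
  proof
    assume "\<gamma> j = \<gamma> i"
    moreover have "i \<le> r" using that by linarith
    ultimately show False using inj_onD[OF assms, of j i] that by simp
  qed
  then show ?thesis by (simp add: prod_zero_iff)
qed

section \<open>Diagonalisation and spectral projectors\<close>

lemma eigenvector_combination_zero:
  fixes X :: "'a :: field mat" and u :: "nat \<Rightarrow> 'a vec"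
  assumes X: "X \<in> carrier_mat n n"
    and ev: "\<And>i. i < m \<Longrightarrow> eigenvector X (u i) (a i)"
    and inj: "inj_on a {..<m}"
    and comb: "\<And>k. k < n \<Longrightarrow> (\<Sum>i<m. c i * u i $ k) = 0"
    and i: "i < m"
  shows "c i = 0"
  using ev inj comb i
proof (induction m arbitrary: c i)
  case 0
  then show ?case by simp
next
  case (Suc m)
  have u: "u j \<in> carrier_vec n" "u j \<noteq> 0\<^sub>v n" "X *\<^sub>v u j = a j \<cdot>\<^sub>v u j" if "j < Suc m" for j
    using Suc.prems(1)[OF that] X unfolding eigenvector_def by auto
  have dim: "dim_vec (u j) = n" if "j < Suc m" for j using u(1)[OF that] by simp
  have Xcomb: "(\<Sum>j<Suc m. c j * a j * u j $ k) = 0" if k: "k < n" for k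
  proof -
    have "(\<Sum>j<Suc m. c j * a j * u j $ k) = (\<Sum>j<Suc m. c j * (\<Sum>l<n. X $$ (k,l) * u j $ l))"
    proof (intro sum.cong refl)
      fix j assume "j \<in> {..<Suc m}"
      then have "a j * u j $ k = (X *\<^sub>v u j) $ k" using u(3) dim k by simp
      also have "\<dots> = (\<Sum>l<n. X $$ (k,l) * u j $ l)"
        using \<open>j \<in> {..<Suc m}\<close> by (intro index_mult_mat_vec_sum[OF X u(1) k]) simp
      finally show "c j * a j * u j $ k = c j * (\<Sum>l<n. X $$ (k,l) * u j $ l)" by simp
    qed
    also have "\<dots> = (\<Sum>l<n. X $$ (k,l) * (\<Sum>j<Suc m. c j * u j $ l))"
      unfolding sum_distrib_left by (subst sum.swap) (simp add: mult.left_commute del: sum.lessThan_Suc)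
    finally show ?thesis using Suc.prems(3) by simp
  qed
  have shifted: "(\<Sum>j<m. c j * (a j - a m) * u j $ k) = 0" if k: "k < n" for k
  proof -
    have "(\<Sum>j<m. c j * (a j - a m) * u j $ k) =
        (\<Sum>j<Suc m. c j * a j * u j $ k) - a m * (\<Sum>j<Suc m. c j * u j $ k)"
      by (simp add: algebra_simps sum_subtractf sum_distrib_left)
    then show ?thesis using Xcomb[OF k] Suc.prems(3)[OF k] by simp
  qed
  have lower: "c j = 0" if j: "j < m" for j
  proof -
    have "c j * (a j - a m) = 0"
      using Suc.IH[of "\<lambda>j. c j * (a j - a m)" j] Suc.prems(1) shifted j
        inj_on_subset[OF Suc.prems(2), of "{..<m}"] by auto
    moreover have "a j \<noteq> a m" using inj_onD[OF Suc.prems(2)] j by fastforce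
    ultimately show ?thesis by simp
  qed
  obtain k where k: "k < n" "u m $ k \<noteq> 0"
    using u(1,2)[of m] by (metis eq_vecI index_zero_vec carrier_vecD lessI)
  have "c m * u m $ k = 0" using Suc.prems(3)[OF k(1)] lower by simp
  then have "c m = 0" using k(2) by simp
  then show ?case using lower Suc.prems(4) less_Suc_eq by auto
qed

lemma diagonalize_distinct_eigenvalues:
  fixes X :: "'a :: field mat"
  assumes X: "X \<in> carrier_mat n n"
    and cp: "char_poly X = (\<Prod>i<n. [:- a i, 1:])"
    and inj: "inj_on a {..<n}"
  obtains U Ui where "similar_mat_wit X (mat_diag n a) U Ui"
proof -
  have "eigenvalue X (a i)" if "i < n" for i
    using that by (auto simp: eigenvalue_root_char_poly[OF X] cp poly_prod prod_zero_iff)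
  then obtain u where u: "\<And>i. i < n \<Longrightarrow> eigenvector X (u i) (a i)"
    unfolding eigenvalue_def by metis
  have uc: "u i \<in> carrier_vec n" "dim_vec (u i) = n" "X *\<^sub>v u i = a i \<cdot>\<^sub>v u i" if "i < n" for i
    using u[OF that] X unfolding eigenvector_def by auto
  define U where "U = mat n n (\<lambda>(k,i). u i $ k)"
  have U: "U \<in> carrier_mat n n" by (simp add: U_def)
  have colU: "col U i = u i" if "i < n" for i
    using uc(1)[OF that] that by (intro eq_vecI) (auto simp: U_def)
  have XU: "X * U = U * mat_diag n a"
  proof (rule eq_matI)
    fix k i assume "k < dim_row (U * mat_diag n a)" "i < dim_col (U * mat_diag n a)"
    then have ki: "k < n" "i < n" using U by auto
    have "(X * U) $$ (k,i) = (X *\<^sub>v u i) $ k"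
      using ki X U colU[of i] by simp
    then show "(X * U) $$ (k,i) = (U * mat_diag n a) $$ (k,i)"
      using ki uc by (subst mat_diag_mult_right[OF U]) (simp add: U_def)
  qed (use X U in auto)
  have "det U \<noteq> 0"
  proof
    assume "det U = 0"
    then obtain v where v: "v \<in> carrier_vec n" "v \<noteq> 0\<^sub>v n" "U *\<^sub>v v = 0\<^sub>v n"
      using det_0_iff_vec_prod_zero_field[OF U] by auto
    have "(\<Sum>i<n. v $ i * u i $ k) = 0" if "k < n" for k
    proof -
      have "(\<Sum>i<n. v $ i * u i $ k) = (\<Sum>i<n. U $$ (k,i) * v $ i)"
        using that by (intro sum.cong) (auto simp: U_def)
      also have "\<dots> = (U *\<^sub>v v) $ k"
        by (rule index_mult_mat_vec_sum[OF U v(1) that, symmetric])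
      also have "\<dots> = 0" using v(3) that by simp
      finally show ?thesis .
    qed
    then have "v $ i = 0" if "i < n" for i
      using eigenvector_combination_zero[OF X u inj] that by blast
    then show False using v(1,2) by (auto intro: eq_vecI)
  qed
  then obtain Ui where Ui: "Ui \<in> carrier_mat n n" "Ui * U = 1\<^sub>m n" "U * Ui = 1\<^sub>m n"
    using det_non_zero_imp_unit[OF U] unfolding Units_def by (auto simp: ring_mat_def)
  have "X = X * (U * Ui)" using X Ui(3) by simp
  also have "\<dots> = U * mat_diag n a * Ui" using X U Ui(1) by (simp flip: XU)
  finally show ?thesis
    using that similar_mat_witI[OF Ui(3,2) _ X mat_diag_dim U Ui(1)] by blast
qed

lemma similar_mat_wit_mat_diagD:
  assumes sim: "similar_mat_wit X (mat_diag n a) U Ui"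
  shows "X \<in> carrier_mat n n" "U \<in> carrier_mat n n" "Ui \<in> carrier_mat n n"
    "U * Ui = 1\<^sub>m n" "Ui * U = 1\<^sub>m n" "X = U * mat_diag n a * Ui"
proof -
  have "mat_diag n a \<in> carrier_mat (dim_row X) (dim_row X)"
    using sim unfolding similar_mat_wit_def Let_def by blast
  then have n: "n = dim_row X" using carrier_matD(1) by fastforce
  show "X \<in> carrier_mat n n" "U \<in> carrier_mat n n" "Ui \<in> carrier_mat n n"
    "U * Ui = 1\<^sub>m n" "Ui * U = 1\<^sub>m n" "X = U * mat_diag n a * Ui"
    using similar_mat_witD[OF n sim] by blast+
qed

lemma similar_mat_wit_transpose_conj:
  fixes Y :: "'a :: comm_ring_1 mat"
  assumes sim: "similar_mat_wit Y B V W" and B: "transpose_mat B = B" and Y: "Y \<in> carrier_mat n n"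
    and E: "E \<in> carrier_mat n n" and Ei: "Ei \<in> carrier_mat n n" and EEi: "E * Ei = 1\<^sub>m n" and EiE: "Ei * E = 1\<^sub>m n"
  shows "similar_mat_wit (E * transpose_mat Y * Ei) B (E * transpose_mat W) (transpose_mat V * Ei)"
proof -
  have n: "n = dim_row Y" using Y by simp
  note sim = similar_mat_witD[OF n sim]
  note assoc = assoc_mult_mat[of _ n n _ n _ n] mult_carrier_mat[of _ n n _ n]
  have WV: "transpose_mat W * transpose_mat V = 1\<^sub>m n"
    using sim by (simp flip: transpose_mult[of _ n n _ n])
  have VW: "transpose_mat V * transpose_mat W = 1\<^sub>m n"
    using sim by (simp flip: transpose_mult[of _ n n _ n])
  have VT: "transpose_mat V \<in> carrier_mat n n" and WT: "transpose_mat W \<in> carrier_mat n n"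
    using sim by simp_all
  have EiEM: "Ei * (E * M) = M" if "M \<in> carrier_mat n n" for M
    unfolding assoc_mult_mat[OF Ei E that, symmetric] EiE using that by simp
  have WVM: "transpose_mat W * (transpose_mat V * M) = M" if "M \<in> carrier_mat n n" for M
    using that unfolding assoc_mult_mat[OF WT VT that, symmetric] WV
    by simp
  have "transpose_mat Y = transpose_mat W * B * transpose_mat V"
    using sim B by (simp add: transpose_mult[of _ n n _ n] assoc)
  then show ?thesis
    using sim E Ei by (intro similar_mat_witI[of _ _ n]) (simp_all add: assoc EEi VW EiEM WVM)
qed

lemma diag_entry_transpose_conj:
  fixes V :: "'a :: field mat"
  assumes V: "V \<in> carrier_mat n n" and W: "W \<in> carrier_mat n n" and i: "i < n"
    and e: "\<And>k. k < n \<Longrightarrow> e k \<noteq> 0"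
  shows "(transpose_mat W * mat_diag n (\<lambda>k. 1 / e k) * mat_diag n d * (mat_diag n e * transpose_mat V)) $$ (i,i) =
    (V * mat_diag n d * W) $$ (i,i)"
proof -
  have WT: "transpose_mat W \<in> carrier_mat n n" and VT: "transpose_mat V \<in> carrier_mat n n"
    using V W by simp_all
  have "(transpose_mat W * mat_diag n (\<lambda>k. 1 / e k) * mat_diag n d * (mat_diag n e * transpose_mat V)) $$ (i,i) =
      (\<Sum>t<n. (transpose_mat W * mat_diag n (\<lambda>k. 1 / e k)) $$ (i,t) * d t * (mat_diag n e * transpose_mat V) $$ (t,i))"
    by (rule conj_mat_diag_entry[OF mult_carrier_mat[OF WT mat_diag_dim] mult_carrier_mat[OF mat_diag_dim VT] i i])
  also have "\<dots> = (\<Sum>t<n. V $$ (i,t) * d t * W $$ (t,i))"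
    using i V W e by (intro sum.cong refl) (simp add: mat_diag_mult_right[OF WT] mat_diag_mult_left[OF VT])
  also have "\<dots> = (V * mat_diag n d * W) $$ (i,i)"
    by (rule conj_mat_diag_entry[OF V W i i, symmetric])
  finally show ?thesis .
qed

text \<open>The Lagrange product \<open>\<Prod>m \<noteq> i. (X - a m) / (a i - a m)\<close>; when \<open>X\<close> has the distinct
  eigenvalues \<open>a 0, \<dots>, a (n - 1)\<close> it is the spectral projector onto the eigenline of \<open>a i\<close>.\<close>
fun spectral_proj :: "nat \<Rightarrow> 'a :: field mat \<Rightarrow> (nat \<Rightarrow> 'a) \<Rightarrow> nat \<Rightarrow> nat \<Rightarrow> 'a mat" where
  "spectral_proj n X a i 0 = 1\<^sub>m n"
| "spectral_proj n X a i (Suc m) = (if m = i then spectral_proj n X a i m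
     else (1 / (a i - a m)) \<cdot>\<^sub>m ((X - a m \<cdot>\<^sub>m 1\<^sub>m n) * spectral_proj n X a i m))"

lemma spectral_proj_carrier: "X \<in> carrier_mat n n \<Longrightarrow> spectral_proj n X a i m \<in> carrier_mat n n"
  by (induction m) auto

lemma index_spectral_proj_step:
  fixes X :: "'a :: field mat"
  assumes X: "X \<in> carrier_mat n n" and Q: "Q \<in> carrier_mat n n" and kl: "k < n" "l < n"
  shows "(c \<cdot>\<^sub>m ((X - b \<cdot>\<^sub>m 1\<^sub>m n) * Q)) $$ (k,l) =
    c * ((\<Sum>t<n. X $$ (k,t) * Q $$ (t,l)) - b * Q $$ (k,l))"
proof -
  have M: "X - b \<cdot>\<^sub>m 1\<^sub>m n \<in> carrier_mat n n" by (intro minus_carrier_mat) simp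
  have "((X - b \<cdot>\<^sub>m 1\<^sub>m n) * Q) $$ (k,l) = (\<Sum>t<n. (X - b \<cdot>\<^sub>m 1\<^sub>m n) $$ (k,t) * Q $$ (t,l))"
    by (rule index_mult_mat_sum[OF M Q kl])
  also have "\<dots> = (\<Sum>t<n. X $$ (k,t) * Q $$ (t,l) - (if t = k then b * Q $$ (k,l) else 0))"
    using kl X by (intro sum.cong refl) (auto simp: algebra_simps)
  also have "\<dots> = (\<Sum>t<n. X $$ (k,t) * Q $$ (t,l)) - b * Q $$ (k,l)"
    using kl by (simp add: sum_subtractf)
  finally show ?thesis using kl M Q by simp
qed

lemma spectral_proj_conj_mat_diag:
  assumes sim: "similar_mat_wit X (mat_diag n a) U Ui"
  shows "spectral_proj n X a i m = U * mat_diag n (\<lambda>k. \<Prod>j\<in>{..<m}-{i}. (a k - a j) / (a i - a j)) * Ui"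
proof (induction m)
  note sim = similar_mat_wit_mat_diagD[OF sim]
  note U = sim(2) and Ui = sim(3) and UUi = sim(4) and UiU = sim(5) and X = sim(6)
  have shift: "X - c \<cdot>\<^sub>m 1\<^sub>m n = U * mat_diag n (\<lambda>k. a k - c) * Ui" for c
    unfolding X by (rule conj_mat_diag_minus_smult_one[OF U Ui UUi])
  {
    case 0
    show ?case using U UUi by simp
  next
    case (Suc m)
    show ?case
    proof (cases "m = i")
      case True
      then have "{..<Suc m}-{i} = {..<m}-{i}" by auto
      then show ?thesis using Suc True by simp
    next
      case False
      then have split: "{..<Suc m}-{i} = insert m ({..<m}-{i})" by auto
      have "spectral_proj n X a i (Suc m) = (1 / (a i - a m)) \<cdot>\<^sub>m ((X - a m \<cdot>\<^sub>m 1\<^sub>m n) * spectral_proj n X a i m)"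
        using False by simp
      also have "\<dots> = (1 / (a i - a m)) \<cdot>\<^sub>m ((U * mat_diag n (\<lambda>k. a k - a m) * Ui) *
          (U * mat_diag n (\<lambda>k. \<Prod>j\<in>{..<m}-{i}. (a k - a j) / (a i - a j)) * Ui))"
        by (simp only: shift Suc.IH)
      also have "\<dots> = U * mat_diag n (\<lambda>k. 1 / (a i - a m) *
          ((a k - a m) * (\<Prod>j\<in>{..<m}-{i}. (a k - a j) / (a i - a j)))) * Ui"
        by (simp only: conj_mat_diag_mult[OF U Ui UiU] conj_mat_diag_smult[OF U Ui])
      also have "(\<lambda>k. 1 / (a i - a m) * ((a k - a m) * (\<Prod>j\<in>{..<m}-{i}. (a k - a j) / (a i - a j)))) =
          (\<lambda>k. \<Prod>j\<in>{..<Suc m}-{i}. (a k - a j) / (a i - a j))"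
        unfolding split by simp
      finally show ?thesis .
    qed
  }
qed

lemma sum_diag_spectral_proj:
  assumes sim: "similar_mat_wit X (mat_diag n a) U Ui" and inj: "inj_on a {..<n}" and i: "i < n"
  shows "(\<Sum>k<n. g k * spectral_proj n X a i n $$ (k,k)) = (Ui * mat_diag n g * U) $$ (i,i)"
proof -
  note U = similar_mat_wit_mat_diagD(2)[OF sim] and Ui = similar_mat_wit_mat_diagD(3)[OF sim]
  have delta: "(\<Prod>j\<in>{..<n}-{i}. (a k - a j) / (a i - a j)) = (if k = i then 1 else 0)" if "k < n" for k
  proof (cases "k = i")
    case True
    have "a i \<noteq> a j" if "j \<in> {..<n}-{i}" for j using inj_onD[OF inj, of i j] i that by auto
    then show ?thesis using True by (simp add: prod.neutral)
  next
    case False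
    then show ?thesis using that by (auto simp: prod_zero_iff)
  qed
  have proj: "spectral_proj n X a i n $$ (k,k) = U $$ (k,i) * Ui $$ (i,k)" if k: "k < n" for k
  proof -
    have "spectral_proj n X a i n $$ (k,k) =
        (\<Sum>t<n. U $$ (k,t) * (\<Prod>j\<in>{..<n}-{i}. (a t - a j) / (a i - a j)) * Ui $$ (t,k))"
      unfolding spectral_proj_conj_mat_diag[OF sim] by (rule conj_mat_diag_entry[OF U Ui k k])
    also have "\<dots> = (\<Sum>t<n. if t = i then U $$ (k,i) * Ui $$ (i,k) else 0)"
      by (intro sum.cong) (auto simp: delta)
    finally show ?thesis using i by simp
  qed
  have "(\<Sum>k<n. g k * spectral_proj n X a i n $$ (k,k)) = (\<Sum>k<n. Ui $$ (i,k) * g k * U $$ (k,i))"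
    by (intro sum.cong refl) (simp add: proj mult_ac)
  also have "\<dots> = (Ui * mat_diag n g * U) $$ (i,i)"
    by (rule conj_mat_diag_entry[OF Ui U i i, symmetric])
  finally show ?thesis .
qed

lemma commutator_in_eigenbasis:
  fixes X :: "'a :: field mat"
  assumes sim: "similar_mat_wit X (mat_diag n a) U Ui"
    and comm: "X * mat_diag n g - mat_diag n g * X = mat n n (\<lambda>(m,l). u m * v l) - 1\<^sub>m n"
    and ik: "i < n" "k < n"
  shows "(a i - a k) * (Ui * mat_diag n g * U) $$ (i,k) =
    (\<Sum>m<n. Ui $$ (i,m) * u m) * (\<Sum>l<n. v l * U $$ (l,k)) - (if i = k then 1 else 0)"
proof -
  let ?A = "mat_diag n a" and ?G = "mat_diag n g" and ?R = "mat n n (\<lambda>(m,l). u m * v l)"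
  let ?Y = "Ui * ?G * U"
  note sim = similar_mat_wit_mat_diagD[OF sim]
  note X = sim(1) and U = sim(2) and Ui = sim(3) and UiU = sim(5) and XA = sim(6)
  note assoc = assoc_mult_mat[of _ n n _ n _ n] mult_carrier_mat[of _ n n _ n]
  have UiUW: "Ui * (U * W) = W" if "W \<in> carrier_mat n n" for W
    unfolding assoc_mult_mat[OF Ui U that, symmetric] UiU using that by simp
  have Y: "?Y \<in> carrier_mat n n" by (rule mult_carrier_mat[OF mult_carrier_mat[OF Ui mat_diag_dim] U])
  have "?A * ?Y - ?Y * ?A = Ui * (X * ?G - ?G * X) * U"
    using U Ui by (simp add: mult_minus_distrib_mat[of _ n n _ n] minus_mult_distrib_mat[of _ n n _ _ n]
        assoc XA UiUW UiU)
  also have "\<dots> = Ui * ?R * U - 1\<^sub>m n"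
    using U Ui UiU by (simp add: comm mult_minus_distrib_mat[of _ n n _ n] minus_mult_distrib_mat[of _ n n _ _ n])
  finally have "(?A * ?Y - ?Y * ?A) $$ (i,k) = (Ui * ?R * U - 1\<^sub>m n) $$ (i,k)"
    by simp
  moreover have "(?A * ?Y - ?Y * ?A) $$ (i,k) = (a i - a k) * ?Y $$ (i,k)"
    using ik Y by (simp add: mat_diag_mult_left[OF Y] mat_diag_mult_right[OF Y] algebra_simps)
  moreover have "(Ui * ?R * U - 1\<^sub>m n) $$ (i,k) =
      (\<Sum>m<n. Ui $$ (i,m) * u m) * (\<Sum>l<n. v l * U $$ (l,k)) - (if i = k then 1 else 0)"
    unfolding mult_rank_one_mult[OF Ui U ik, symmetric] using ik U Ui by simp
  ultimately show ?thesis by simp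
qed

section \<open>Lagrange interpolation at distinct nodes\<close>

definition lagrange_weight :: "nat \<Rightarrow> (nat \<Rightarrow> 'a :: field) \<Rightarrow> nat \<Rightarrow> 'a" where
  "lagrange_weight r x k = (\<Prod>m\<in>{..r}-{k}. x k - x m)"

definition lagrange_basis :: "nat \<Rightarrow> (nat \<Rightarrow> 'a :: field) \<Rightarrow> nat \<Rightarrow> 'a poly" where
  "lagrange_basis r x k = (\<Prod>m\<in>{..r}-{k}. [:- x m, 1:])"

definition nodal_deriv :: "nat \<Rightarrow> (nat \<Rightarrow> 'a :: field) \<Rightarrow> nat \<Rightarrow> nat \<Rightarrow> 'a" where
  "nodal_deriv r x i k = poly (pderiv (lagrange_basis r x k)) (x i) / lagrange_weight r x k"

lemma lagrange_weight_nonzero: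
  "inj_on x {..r} \<Longrightarrow> k \<le> r \<Longrightarrow> lagrange_weight r x k \<noteq> 0"
  unfolding lagrange_weight_def by (auto simp: inj_on_def)

lemma poly_lagrange_basis:
  assumes "inj_on x {..r}" "i \<le> r" "k \<le> r"
  shows "poly (lagrange_basis r x k) (x i) = (if i = k then lagrange_weight r x k else 0)"
  using assms unfolding lagrange_basis_def lagrange_weight_def
  by (auto simp: poly_prod prod_zero_iff)

lemma degree_lagrange_basis: "k \<le> r \<Longrightarrow> degree (lagrange_basis r x k) \<le> r"
  unfolding lagrange_basis_def
  by (rule order.trans[OF degree_prod_sum_le]) (auto simp: card_Diff_singleton)

lemma lagrange_interpolation:
  assumes inj: "inj_on x {..r}" and q: "degree q \<le> r"
  shows "(\<Sum>k\<le>r. smult (poly q (x k) / lagrange_weight r x k) (lagrange_basis r x k)) = q"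
    (is "?L = q")
proof (rule poly_eqI_degree[where A = "x ` {..r}"])
  fix z assume "z \<in> x ` {..r}"
  then obtain i where i: "i \<le> r" "z = x i" by auto
  have "poly ?L z = (\<Sum>k\<le>r. poly q (x k) / lagrange_weight r x k * (if i = k then lagrange_weight r x k else 0))"
    using i inj by (simp add: poly_sum poly_lagrange_basis)
  also have "\<dots> = poly q z"
    using i lagrange_weight_nonzero[OF inj] by (simp add: if_distrib cong: if_cong)
  finally show "poly ?L z = poly q z" .
next
  have card: "card (x ` {..r}) = Suc r" using inj by (simp add: card_image)
  have "degree ?L \<le> r"
    by (intro degree_sum_le order.trans[OF degree_smult_le] degree_lagrange_basis) auto
  then show "degree ?L < card (x ` {..r})" using card by simp
  show "degree q < card (x ` {..r})" using card q by simp
qed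

lemma sum_nodal_deriv:
  assumes "inj_on x {..r}" "degree q \<le> r"
  shows "(\<Sum>k\<le>r. nodal_deriv r x i k * poly q (x k)) = poly (pderiv q) (x i)"
proof -
  have "poly (pderiv q) (x i) =
      poly (pderiv (\<Sum>k\<le>r. smult (poly q (x k) / lagrange_weight r x k) (lagrange_basis r x k))) (x i)"
    by (simp only: lagrange_interpolation[OF assms])
  then show ?thesis
    by (simp add: pderiv_sum pderiv_smult poly_sum nodal_deriv_def field_simps)
qed

lemma poly_pderiv_lagrange_basis:
  "poly (pderiv (lagrange_basis r x k)) z = (\<Sum>m\<in>{..r}-{k}. \<Prod>l\<in>{..r}-{k}-{m}. z - x l)"
  unfolding lagrange_basis_def pderiv_prod by (simp add: poly_sum poly_prod pderiv_pCons)

lemma nodal_deriv_off_diag: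
  assumes inj: "inj_on x {..r}" and ik: "i \<noteq> k" "i \<le> r" "k \<le> r"
  shows "(x i - x k) * nodal_deriv r x i k = lagrange_weight r x i / lagrange_weight r x k"
proof -
  have vanish: "(\<Prod>l\<in>{..r}-{k}-{m}. x i - x l) = 0" if "m \<in> {..r}-{k}-{i}" for m
    using that ik by (auto simp: prod_zero_iff)
  have "poly (pderiv (lagrange_basis r x k)) (x i) = (\<Prod>l\<in>{..r}-{k}-{i}. x i - x l)"
    unfolding poly_pderiv_lagrange_basis
    using ik by (subst sum.remove[of _ i]) (auto simp: vanish)
  moreover have "lagrange_weight r x i = (x i - x k) * (\<Prod>l\<in>{..r}-{k}-{i}. x i - x l)"
    unfolding lagrange_weight_def using ik
    by (subst prod.remove[of _ k]) (auto intro!: prod.cong)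
  ultimately show ?thesis
    unfolding nodal_deriv_def using lagrange_weight_nonzero[OF inj ik(3)] by simp
qed

section \<open>The Wronskian as a characteristic polynomial\<close>

text \<open>Conjugating by the diagonal matrix of Lagrange weights turns this into the rational Calogero--Moser
  Lax matrix, with positions \<open>x\<close>, momenta \<open>p\<close> and off-diagonal entries \<open>1 / (x k - x i)\<close>.\<close>
definition lax_mat :: "nat \<Rightarrow> (nat \<Rightarrow> 'a :: field) \<Rightarrow> (nat \<Rightarrow> 'a) \<Rightarrow> 'a mat" where
  "lax_mat r x p = mat (Suc r) (Suc r) (\<lambda>(i,k). (if i = k then p i else 0) - nodal_deriv r x i k)"

lemma lax_mat_carrier [simp]: "lax_mat r x p \<in> carrier_mat (Suc r) (Suc r)"
  by (simp add: lax_mat_def)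

lemma lax_mat_dims [simp]: "dim_row (lax_mat r x p) = Suc r" "dim_col (lax_mat r x p) = Suc r"
  by (simp_all add: lax_mat_def)

lemma twisted_der_pow_linear:
  "twisted_der_pow c j [:- q, 1:] = [:- q * c ^ j + of_nat j * c ^ (j - 1), c ^ j:]"
proof (induction j)
  case 0
  show ?case by (simp add: twisted_der_pow_def)
next
  case (Suc j)
  then show ?case
    by (cases j) (auto simp: twisted_der_pow_def pderiv_pCons algebra_simps)
qed

interpretation const_poly: comm_ring_hom "\<lambda>c :: 'a :: comm_ring_1. [:c:]"
  by unfold_locales auto

text \<open>The Wronski matrix factors as \<open>(z - X) V\<close> with \<open>X = lax_mat r \<gamma> p\<close> and \<open>V\<close> the Vandermonde
  matrix of \<open>\<gamma>\<close>: entry \<open>(i, j)\<close> of \<open>X V\<close> is \<open>p i \<gamma> i ^ j - j \<gamma> i ^ (j - 1)\<close> by \<open>sum_nodal_deriv\<close>.\<close>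
lemma twisted_wronskian_eq_char_poly:
  assumes inj: "inj_on \<gamma> {..r}"
  shows "twisted_wronskian r \<gamma> p = smult (\<Prod>j\<le>r. \<Prod>i<j. \<gamma> j - \<gamma> i) (char_poly (lax_mat r \<gamma> p))"
proof -
  let ?n = "Suc r" and ?X = "lax_mat r \<gamma> p"
  let ?CP = "char_poly_matrix ?X" and ?V = "map_mat (\<lambda>c. [:c:]) (vandermonde_mat ?n \<gamma>)"
  have CP: "?CP \<in> carrier_mat ?n ?n" and V: "?V \<in> carrier_mat ?n ?n" by simp_all
  have XV: "(\<Sum>l<?n. ?X $$ (i,l) * \<gamma> l ^ j) = p i * \<gamma> i ^ j - of_nat j * \<gamma> i ^ (j - 1)"
    if "i < ?n" "j < ?n" for i j
  proof -
    have "(\<Sum>l\<le>r. nodal_deriv r \<gamma> i l * \<gamma> l ^ j) = of_nat j * \<gamma> i ^ (j - 1)"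
      using sum_nodal_deriv[OF inj, of "monom 1 j" i] that
      by (simp add: degree_monom_eq poly_monom pderiv_monom)
    moreover have "(\<Sum>l<?n. ?X $$ (i,l) * \<gamma> l ^ j) =
        (\<Sum>l\<le>r. if l = i then p i * \<gamma> i ^ j else 0) - (\<Sum>l\<le>r. nodal_deriv r \<gamma> i l * \<gamma> l ^ j)"
      unfolding lessThan_Suc_atMost sum_subtractf[symmetric]
      using that by (intro sum.cong) (auto simp: lax_mat_def algebra_simps)
    ultimately show ?thesis
      using that by simp
  qed
  have "mat ?n ?n (\<lambda>(i, j). twisted_der_pow (\<gamma> i) j [:- p i, 1:]) = ?CP * ?V"
  proof (rule eq_matI)
    fix i j assume "i < dim_row (?CP * ?V)" "j < dim_col (?CP * ?V)"
    then have ij: "i < ?n" "j < ?n" using CP V by auto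
    have "mat ?n ?n (\<lambda>(i, j). twisted_der_pow (\<gamma> i) j [:- p i, 1:]) $$ (i,j) =
        twisted_der_pow (\<gamma> i) j [:- p i, 1:]"
      using ij by simp
    also have "\<dots> = [:- p i * \<gamma> i ^ j + of_nat j * \<gamma> i ^ (j - 1), \<gamma> i ^ j:]"
      by (rule twisted_der_pow_linear)
    also have "\<dots> = (\<Sum>l<?n. (if l = i then [:0, \<gamma> i ^ j:] else 0) + [:- (?X $$ (i,l) * \<gamma> l ^ j):])"
      using ij by (simp add: sum.distrib sum_to_poly sum_negf XV del: sum.lessThan_Suc)
    also have "\<dots> = (?CP * ?V) $$ (i,j)"
      using ij by (subst index_mult_mat_sum[OF CP V ij], intro sum.cong)
        (auto simp: char_poly_matrix_def vandermonde_mat_def)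
    finally show "mat ?n ?n (\<lambda>(i, j). twisted_der_pow (\<gamma> i) j [:- p i, 1:]) $$ (i,j) = (?CP * ?V) $$ (i,j)" .
  qed (auto simp: char_poly_matrix_def)
  then have "twisted_wronskian r \<gamma> p = det ?CP * det ?V"
    unfolding twisted_wronskian_def by (simp add: det_mult[OF CP V])
  then show ?thesis
    by (simp add: char_poly_def det_vandermonde_mat lessThan_Suc_atMost)
qed

lemma Wr_iff_char_poly:
  "inj_on \<gamma> {..r} \<Longrightarrow> Wr r \<gamma> p a \<longleftrightarrow> char_poly (lax_mat r \<gamma> p) = (\<Prod>i\<le>r. [:- a i, 1:])"
  unfolding Wr_def twisted_wronskian_eq_char_poly
  by (auto dest: smult_cancel[OF vandermonde_nonzero])

lemma lax_mat_commutator: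
  assumes inj: "inj_on \<gamma> {..r}"
  shows "lax_mat r \<gamma> p * mat_diag (Suc r) \<gamma> - mat_diag (Suc r) \<gamma> * lax_mat r \<gamma> p =
    mat (Suc r) (Suc r) (\<lambda>(m,l). lagrange_weight r \<gamma> m / lagrange_weight r \<gamma> l) - 1\<^sub>m (Suc r)"
proof (rule eq_matI)
  fix m l assume "m < dim_row (mat (Suc r) (Suc r) (\<lambda>(m,l). lagrange_weight r \<gamma> m / lagrange_weight r \<gamma> l) - 1\<^sub>m (Suc r))"
    "l < dim_col (mat (Suc r) (Suc r) (\<lambda>(m,l). lagrange_weight r \<gamma> m / lagrange_weight r \<gamma> l) - 1\<^sub>m (Suc r))"
  then have ml: "m \<le> r" "l \<le> r" by auto
  have XG: "(lax_mat r \<gamma> p * mat_diag (Suc r) \<gamma>) $$ (m,l) = lax_mat r \<gamma> p $$ (m,l) * \<gamma> l"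
    using ml by (simp add: mat_diag_mult_right[OF lax_mat_carrier])
  have GX: "(mat_diag (Suc r) \<gamma> * lax_mat r \<gamma> p) $$ (m,l) = \<gamma> m * lax_mat r \<gamma> p $$ (m,l)"
    using ml by (simp add: mat_diag_mult_left[OF lax_mat_carrier])
  have "(lax_mat r \<gamma> p * mat_diag (Suc r) \<gamma> - mat_diag (Suc r) \<gamma> * lax_mat r \<gamma> p) $$ (m,l) =
      (lax_mat r \<gamma> p * mat_diag (Suc r) \<gamma>) $$ (m,l) - (mat_diag (Suc r) \<gamma> * lax_mat r \<gamma> p) $$ (m,l)"
    using ml by (intro index_minus_mat(1)) auto
  also have "\<dots> = lax_mat r \<gamma> p $$ (m,l) * (\<gamma> l - \<gamma> m)"
    unfolding XG GX by (simp add: algebra_simps)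
  also have "\<dots> = (mat (Suc r) (Suc r) (\<lambda>(m,l). lagrange_weight r \<gamma> m / lagrange_weight r \<gamma> l) - 1\<^sub>m (Suc r)) $$ (m,l)"
  proof (cases "m = l")
    case True
    then show ?thesis using ml lagrange_weight_nonzero[OF inj ml(1)] by simp
  next
    case False
    then show ?thesis
      using ml nodal_deriv_off_diag[OF inj False ml] by (simp add: lax_mat_def algebra_simps)
  qed
  finally show "(lax_mat r \<gamma> p * mat_diag (Suc r) \<gamma> - mat_diag (Suc r) \<gamma> * lax_mat r \<gamma> p) $$ (m,l) =
      (mat (Suc r) (Suc r) (\<lambda>(m,l). lagrange_weight r \<gamma> m / lagrange_weight r \<gamma> l) - 1\<^sub>m (Suc r)) $$ (m,l)" .
qed auto

section \<open>The dual momenta\<close>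

text \<open>Written with spectral projectors so that it is visibly a rational function of \<open>\<gamma>, p, a\<close>;
  see \<open>dual_momenta_eigenbasis\<close> for what it computes. For \<open>i > r\<close> it is \<open>0\<close>, like
  the unused coordinates.\<close>
definition dual_momenta :: "nat \<Rightarrow> (nat \<Rightarrow> 'a :: field) \<Rightarrow> (nat \<Rightarrow> 'a) \<Rightarrow> (nat \<Rightarrow> 'a) \<Rightarrow> nat \<Rightarrow> 'a" where
  "dual_momenta r \<gamma> p a i = (if i \<le> r then
     (\<Sum>k\<le>r. \<gamma> k * spectral_proj (Suc r) (lax_mat r \<gamma> p) a i (Suc r) $$ (k,k)) + nodal_deriv r a i i
   else 0)"

lemma dual_momenta_eigenbasis:
  assumes inj: "inj_on a {..r}"
    and sim: "similar_mat_wit (lax_mat r \<gamma> p) (mat_diag (Suc r) a) U Ui" and i: "i \<le> r"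
  shows "dual_momenta r \<gamma> p a i = (Ui * mat_diag (Suc r) \<gamma> * U) $$ (i,i) + nodal_deriv r a i i"
proof -
  have "(\<Sum>k<Suc r. \<gamma> k * spectral_proj (Suc r) (lax_mat r \<gamma> p) a i (Suc r) $$ (k,k)) =
      (Ui * mat_diag (Suc r) \<gamma> * U) $$ (i,i)"
    by (rule sum_diag_spectral_proj[OF sim]) (use inj i in \<open>simp_all add: lessThan_Suc_atMost\<close>)
  then show ?thesis using i by (simp add: dual_momenta_def lessThan_Suc_atMost)
qed

lemma lax_mat_dual_eq:
  fixes a :: "nat \<Rightarrow> 'a :: field"
  assumes inj: "inj_on a {..r}" and Y: "Y \<in> carrier_mat (Suc r) (Suc r)"
    and rel: "\<And>i k. i \<le> r \<Longrightarrow> k \<le> r \<Longrightarrow> (a i - a k) * Y $$ (i,k) = f i * h k - (if i = k then 1 else 0)"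
    and q: "\<And>i. i \<le> r \<Longrightarrow> q i = Y $$ (i,i) + nodal_deriv r a i i"
  shows "lax_mat r a q = mat_diag (Suc r) (\<lambda>k. f k * lagrange_weight r a k) * transpose_mat Y *
    mat_diag (Suc r) (\<lambda>k. 1 / (f k * lagrange_weight r a k))"
proof (rule eq_matI)
  let ?w = "lagrange_weight r a"
  have YT: "transpose_mat Y \<in> carrier_mat (Suc r) (Suc r)" using Y by simp
  have f: "f k \<noteq> 0" "f k * h k = 1" if "k \<le> r" for k using rel[OF that that] by auto
  have w: "?w k \<noteq> 0" if "k \<le> r" for k using lagrange_weight_nonzero[OF inj that] .
  fix i k assume "i < dim_row (mat_diag (Suc r) (\<lambda>k. f k * ?w k) * transpose_mat Y * mat_diag (Suc r) (\<lambda>k. 1 / (f k * ?w k)))"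
    "k < dim_col (mat_diag (Suc r) (\<lambda>k. f k * ?w k) * transpose_mat Y * mat_diag (Suc r) (\<lambda>k. 1 / (f k * ?w k)))"
  then have ik: "i \<le> r" "k \<le> r" by auto
  have "(mat_diag (Suc r) (\<lambda>k. f k * ?w k) * transpose_mat Y * mat_diag (Suc r) (\<lambda>k. 1 / (f k * ?w k))) $$ (i,k) =
      f i * ?w i * Y $$ (k,i) / (f k * ?w k)"
    using ik Y by (simp add: mat_diag_mult_left[OF YT] mat_diag_mult_right[OF mat_carrier])
  also have "\<dots> = lax_mat r a q $$ (i,k)"
  proof (cases "i = k")
    case True
    then show ?thesis using ik f w q by (simp add: lax_mat_def)
  next
    case False
    have aik: "a i \<noteq> a k" using inj_onD[OF inj] ik False by fastforce
    have D: "nodal_deriv r a i k = ?w i / ?w k / (a i - a k)"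
      using nodal_deriv_off_diag[OF inj False ik] aik w[OF ik(2)] by (simp add: eq_divide_eq mult_ac)
    have Yki: "Y $$ (k,i) = f k * h i / (a k - a i)"
      using rel[OF ik(2,1)] aik False by (simp add: eq_divide_eq mult_ac)
    have "f i * ?w i * Y $$ (k,i) / (f k * ?w k) = (f i * h i) * ?w i / ((a k - a i) * ?w k)"
      unfolding Yki using f(1)[OF ik(2)] by simp
    also have "\<dots> = - nodal_deriv r a i k"
      unfolding D f(2)[OF ik(1)] using aik w[OF ik(2)] by (simp add: field_simps)
    also have "\<dots> = lax_mat r a q $$ (i,k)"
      using ik False by (simp add: lax_mat_def)
    finally show ?thesis .
  qed
  finally show "lax_mat r a q $$ (i,k) = (mat_diag (Suc r) (\<lambda>k. f k * ?w k) * transpose_mat Y *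
      mat_diag (Suc r) (\<lambda>k. 1 / (f k * ?w k))) $$ (i,k)" by simp
qed auto

lemma dual_momenta_duality:
  fixes \<gamma> p a :: "nat \<Rightarrow> complex"
  assumes inj\<gamma>: "inj_on \<gamma> {..r}" and inja: "inj_on a {..r}" and W: "Wr r \<gamma> p a"
  shows "Wr r a (dual_momenta r \<gamma> p a) \<gamma>"
    and "\<And>i. i \<le> r \<Longrightarrow> dual_momenta r a (dual_momenta r \<gamma> p a) \<gamma> i = p i"
proof -
  let ?n = "Suc r" and ?G = "mat_diag (Suc r) \<gamma>" and ?A = "mat_diag (Suc r) a"
  have "char_poly (lax_mat r \<gamma> p) = (\<Prod>i<?n. [:- a i, 1:])" and "inj_on a {..<?n}"
    using W inja by (simp_all add: Wr_iff_char_poly[OF inj\<gamma>] lessThan_Suc_atMost)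
  then obtain U Ui where sim: "similar_mat_wit (lax_mat r \<gamma> p) ?A U Ui"
    by (rule diagonalize_distinct_eigenvalues[OF lax_mat_carrier])
  note U = similar_mat_wit_mat_diagD(2-6)[OF sim]
  define Y where "Y = Ui * ?G * U"
  define f where "f i = (\<Sum>m<?n. Ui $$ (i,m) * lagrange_weight r \<gamma> m)" for i
  define h where "h k = (\<Sum>l<?n. inverse (lagrange_weight r \<gamma> l) * U $$ (l,k))" for k
  define e where "e k = f k * lagrange_weight r a k" for k
  have Y: "Y \<in> carrier_mat ?n ?n"
    unfolding Y_def by (rule mult_carrier_mat[OF mult_carrier_mat[OF U(2) mat_diag_dim] U(1)])
  have rel: "(a i - a k) * Y $$ (i,k) = f i * h k - (if i = k then 1 else 0)" if "i \<le> r" "k \<le> r" for i k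
    unfolding Y_def f_def h_def using that
    by (intro commutator_in_eigenbasis[OF sim lax_mat_commutator[OF inj\<gamma>, unfolded divide_inverse]]) auto
  have e: "e k \<noteq> 0" if "k < ?n" for k
    using rel[of k k] lagrange_weight_nonzero[OF inja, of k] that by (auto simp: e_def)
  have "lax_mat r a (dual_momenta r \<gamma> p a) = mat_diag ?n e * transpose_mat Y * mat_diag ?n (\<lambda>k. 1 / e k)"
    unfolding e_def
    by (rule lax_mat_dual_eq[OF inja Y rel]) (simp_all add: dual_momenta_eigenbasis[OF inja sim] Y_def)
  moreover have "similar_mat_wit Y ?G Ui U"
    unfolding Y_def using U by (intro similar_mat_witI[of _ _ ?n]) auto
  ultimately have sim': "similar_mat_wit (lax_mat r a (dual_momenta r \<gamma> p a)) ?G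
      (mat_diag ?n e * transpose_mat U) (transpose_mat Ui * mat_diag ?n (\<lambda>k. 1 / e k))"
    using similar_mat_wit_transpose_conj[OF _ _ Y mat_diag_dim mat_diag_dim mat_diag_mult_inverse[OF e]] by simp
  have "char_poly (lax_mat r a (dual_momenta r \<gamma> p a)) = char_poly ?G"
    using sim' char_poly_similar unfolding similar_mat_def by blast
  then show "Wr r a (dual_momenta r \<gamma> p a) \<gamma>"
    by (simp add: Wr_iff_char_poly[OF inja] char_poly_mat_diag lessThan_Suc_atMost)
  show "dual_momenta r a (dual_momenta r \<gamma> p a) \<gamma> i = p i" if i: "i \<le> r" for i
  proof -
    have "dual_momenta r a (dual_momenta r \<gamma> p a) \<gamma> i =
        (transpose_mat Ui * mat_diag ?n (\<lambda>k. 1 / e k) * ?A * (mat_diag ?n e * transpose_mat U)) $$ (i,i)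
        + nodal_deriv r \<gamma> i i"
      by (rule dual_momenta_eigenbasis[OF inj\<gamma> sim' i])
    also have "\<dots> = (U * ?A * Ui) $$ (i,i) + nodal_deriv r \<gamma> i i"
      using i e by (subst diag_entry_transpose_conj[OF U(1,2)]) auto
    also have "\<dots> = p i"
      using i by (simp flip: U(5) add: lax_mat_def)
    finally show ?thesis .
  qed
qed

section \<open>Rational functions on the spaces of opers\<close>

definition rational_on :: "(var \<Rightarrow> complex) set \<Rightarrow> ((var \<Rightarrow> complex) \<Rightarrow> complex) \<Rightarrow> bool" where
  "rational_on S f \<longleftrightarrow> (\<exists>g\<in>polyfun. \<exists>h\<in>polyfun. \<forall>v\<in>S. h v \<noteq> 0 \<and> f v = g v / h v)"

lemma Fun_eq: "Fun S = {f. (\<forall>v. v \<notin> S \<longrightarrow> f v = 0) \<and> rational_on S f}"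
  unfolding Fun_def rational_on_def by simp

lemma rational_on_polyfun: "g \<in> polyfun \<Longrightarrow> rational_on S g"
  unfolding rational_on_def by (intro bexI[of _ g] bexI[of _ "\<lambda>v. 1"]) (auto intro: polyfun.const)

lemma rational_on_const: "rational_on S (\<lambda>v. c)"
  by (rule rational_on_polyfun) (rule polyfun.const)

lemma rational_on_coord: "rational_on S (\<lambda>v. v k)"
  by (rule rational_on_polyfun) (rule polyfun.coord)

lemma rational_on_cong: "(\<And>v. v \<in> S \<Longrightarrow> f v = g v) \<Longrightarrow> rational_on S g \<Longrightarrow> rational_on S f"
  unfolding rational_on_def by metis

lemma rational_onE:
  assumes "rational_on S f"
  obtains g h where "g \<in> polyfun" "h \<in> polyfun" "\<And>v. v \<in> S \<Longrightarrow> h v \<noteq> 0" "\<And>v. v \<in> S \<Longrightarrow> f v = g v / h v"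
  using assms unfolding rational_on_def by blast

lemma rational_onI:
  assumes "g \<in> polyfun" "h \<in> polyfun" "\<And>v. v \<in> S \<Longrightarrow> h v \<noteq> 0 \<and> f v = g v / h v"
  shows "rational_on S f"
  using assms unfolding rational_on_def by blast

lemma rational_on_add:
  assumes "rational_on S f" "rational_on S f'"
  shows "rational_on S (\<lambda>v. f v + f' v)"
proof -
  obtain g h where "g \<in> polyfun" "h \<in> polyfun" "\<And>v. v \<in> S \<Longrightarrow> h v \<noteq> 0 \<and> f v = g v / h v"
    using assms(1) by (auto elim: rational_onE)
  moreover obtain g' h' where "g' \<in> polyfun" "h' \<in> polyfun" "\<And>v. v \<in> S \<Longrightarrow> h' v \<noteq> 0 \<and> f' v = g' v / h' v"
    using assms(2) by (auto elim: rational_onE)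
  ultimately show ?thesis
    by (intro rational_onI[where g = "\<lambda>v. g v * h' v + g' v * h v" and h = "\<lambda>v. h v * h' v"])
      (auto intro: polyfun.add polyfun.mult simp: field_simps)
qed

lemma rational_on_mult:
  assumes "rational_on S f" "rational_on S f'"
  shows "rational_on S (\<lambda>v. f v * f' v)"
proof -
  obtain g h where "g \<in> polyfun" "h \<in> polyfun" "\<And>v. v \<in> S \<Longrightarrow> h v \<noteq> 0 \<and> f v = g v / h v"
    using assms(1) by (auto elim: rational_onE)
  moreover obtain g' h' where "g' \<in> polyfun" "h' \<in> polyfun" "\<And>v. v \<in> S \<Longrightarrow> h' v \<noteq> 0 \<and> f' v = g' v / h' v"
    using assms(2) by (auto elim: rational_onE)
  ultimately show ?thesis
    by (intro rational_onI[where g = "\<lambda>v. g v * g' v" and h = "\<lambda>v. h v * h' v"])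
      (auto intro: polyfun.mult)
qed

lemma rational_on_divide:
  assumes "rational_on S f" "rational_on S f'" "\<And>v. v \<in> S \<Longrightarrow> f' v \<noteq> 0"
  shows "rational_on S (\<lambda>v. f v / f' v)"
proof -
  obtain g h where "g \<in> polyfun" "h \<in> polyfun" "\<And>v. v \<in> S \<Longrightarrow> h v \<noteq> 0 \<and> f v = g v / h v"
    using assms(1) by (auto elim: rational_onE)
  moreover obtain g' h' where "g' \<in> polyfun" "h' \<in> polyfun" "\<And>v. v \<in> S \<Longrightarrow> h' v \<noteq> 0 \<and> f' v = g' v / h' v"
    using assms(2) by (auto elim: rational_onE)
  ultimately show ?thesis
    using assms(3) by (intro rational_onI[where g = "\<lambda>v. g v * h' v" and h = "\<lambda>v. h v * g' v"])
      (auto intro: polyfun.mult)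
qed

lemma rational_on_diff:
  assumes "rational_on S f" "rational_on S f'"
  shows "rational_on S (\<lambda>v. f v - f' v)"
  using rational_on_add[OF assms(1) rational_on_mult[OF rational_on_const assms(2)], of "- 1"]
  by (rule rational_on_cong[rotated]) simp

lemma rational_on_if: "rational_on S f \<Longrightarrow> rational_on S g \<Longrightarrow> rational_on S (\<lambda>v. if c then f v else g v)"
  by (cases c) auto

lemma rational_on_sum:
  "finite I \<Longrightarrow> (\<And>i. i \<in> I \<Longrightarrow> rational_on S (f i)) \<Longrightarrow> rational_on S (\<lambda>v. \<Sum>i\<in>I. f i v)"
  by (induction I rule: finite_induct) (auto intro: rational_on_add rational_on_const)

lemma rational_on_prod:
  "finite I \<Longrightarrow> (\<And>i. i \<in> I \<Longrightarrow> rational_on S (f i)) \<Longrightarrow> rational_on S (\<lambda>v. \<Prod>i\<in>I. f i v)"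
  by (induction I rule: finite_induct) (auto intro: rational_on_mult rational_on_const)

lemma rational_on_polyfun_comp:
  "g \<in> polyfun \<Longrightarrow> (\<And>k. rational_on S (\<lambda>v. \<psi> v k)) \<Longrightarrow> rational_on S (\<lambda>v. g (\<psi> v))"
  by (induction g rule: polyfun.induct) (auto intro: rational_on_const rational_on_add rational_on_mult)

lemma restr_comp_in_Fun:
  assumes maps: "\<And>w. w \<in> S' \<Longrightarrow> \<psi> w \<in> S" and rat: "\<And>k. rational_on S' (\<lambda>w. \<psi> w k)"
    and f: "f \<in> Fun S"
  shows "restr S' (\<lambda>w. f (\<psi> w)) \<in> Fun S'"
proof -
  obtain g h where gh: "g \<in> polyfun" "h \<in> polyfun" "\<And>v. v \<in> S \<Longrightarrow> h v \<noteq> 0" "\<And>v. v \<in> S \<Longrightarrow> f v = g v / h v"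
    using f unfolding Fun_def by blast
  have "rational_on S' (\<lambda>w. g (\<psi> w) / h (\<psi> w))"
    using gh(3) maps
    by (intro rational_on_divide rational_on_polyfun_comp[OF gh(1)] rational_on_polyfun_comp[OF gh(2)] rat) auto
  then have "rational_on S' (restr S' (\<lambda>w. f (\<psi> w)))"
    by (rule rational_on_cong[rotated]) (simp add: restr_def gh(4) maps)
  then show ?thesis unfolding Fun_eq by (simp add: restr_def)
qed

lemma bij_betw_restr_comp:
  assumes \<phi>: "\<And>v. v \<in> S \<Longrightarrow> \<phi> v \<in> S'" and \<psi>: "\<And>w. w \<in> S' \<Longrightarrow> \<psi> w \<in> S"
    and \<psi>\<phi>: "\<And>v. v \<in> S \<Longrightarrow> \<psi> (\<phi> v) = v" and \<phi>\<psi>: "\<And>w. w \<in> S' \<Longrightarrow> \<phi> (\<psi> w) = w"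
    and rat_\<phi>: "\<And>k. rational_on S (\<lambda>v. \<phi> v k)" and rat_\<psi>: "\<And>k. rational_on S' (\<lambda>w. \<psi> w k)"
  shows "bij_betw (\<lambda>f. restr S' (\<lambda>w. f (\<psi> w))) (Fun S) (Fun S')"
proof (rule bij_betw_byWitness[where f' = "\<lambda>f. restr S (\<lambda>v. f (\<phi> v))"])
  have vanish: "f v = 0" if "f \<in> Fun X" "v \<notin> X" for f v X using that unfolding Fun_def by auto
  show "\<forall>f\<in>Fun S. restr S (\<lambda>v. restr S' (\<lambda>w. f (\<psi> w)) (\<phi> v)) = f"
  proof (intro ballI ext)
    fix f v assume "f \<in> Fun S"
    then show "restr S (\<lambda>v. restr S' (\<lambda>w. f (\<psi> w)) (\<phi> v)) v = f v"
      using vanish[of f S v] \<phi> \<psi>\<phi> unfolding restr_def by auto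
  qed
  show "\<forall>f\<in>Fun S'. restr S' (\<lambda>w. restr S (\<lambda>v. f (\<phi> v)) (\<psi> w)) = f"
  proof (intro ballI ext)
    fix f w assume "f \<in> Fun S'"
    then show "restr S' (\<lambda>w. restr S (\<lambda>v. f (\<phi> v)) (\<psi> w)) w = f w"
      using vanish[of f S' w] \<psi> \<phi>\<psi> unfolding restr_def by auto
  qed
  show "(\<lambda>f. restr S' (\<lambda>w. f (\<psi> w))) ` Fun S \<subseteq> Fun S'"
    using restr_comp_in_Fun[OF \<psi> rat_\<psi>] by blast
  show "(\<lambda>f. restr S (\<lambda>v. f (\<phi> v))) ` Fun S' \<subseteq> Fun S"
    using restr_comp_in_Fun[OF \<phi> rat_\<phi>] by blast
qed

lemma Fun_iso_of_birational:
  assumes \<phi>: "\<And>v. v \<in> S \<Longrightarrow> \<phi> v \<in> S'" and \<psi>: "\<And>w. w \<in> S' \<Longrightarrow> \<psi> w \<in> S"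
    and \<psi>\<phi>: "\<And>v. v \<in> S \<Longrightarrow> \<psi> (\<phi> v) = v" and \<phi>\<psi>: "\<And>w. w \<in> S' \<Longrightarrow> \<phi> (\<psi> w) = w"
    and rat_\<phi>: "\<And>k. rational_on S (\<lambda>v. \<phi> v k)" and rat_\<psi>: "\<And>k. rational_on S' (\<lambda>w. \<psi> w k)"
    and fix_G: "\<And>w i. w \<in> S' \<Longrightarrow> \<psi> w (G i) = w (G i)"
    and fix_A: "\<And>w i. w \<in> S' \<Longrightarrow> \<psi> w (A i) = w (A i)"
  shows "Fun_iso S S' (\<lambda>f. restr S' (\<lambda>w. f (\<psi> w))) r"
  unfolding Fun_iso_def
proof (intro conjI allI ballI impI)
  let ?T = "\<lambda>f. restr S' (\<lambda>w. f (\<psi> w))"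
  show "bij_betw ?T (Fun S) (Fun S')" by (rule bij_betw_restr_comp[OF assms(1-6)])
  show "?T (\<lambda>v. f v + g v) = (\<lambda>v. ?T f v + ?T g v)" for f g unfolding restr_def by auto
  show "?T (\<lambda>v. f v * g v) = (\<lambda>v. ?T f v * ?T g v)" for f g unfolding restr_def by auto
  show "?T (restr S (\<lambda>v. c)) = restr S' (\<lambda>v. c)" for c
    unfolding restr_def using \<psi> by auto
  show "?T (restr S (\<lambda>v. v (G i))) = restr S' (\<lambda>v. v (G i))" for i
    unfolding restr_def using \<psi> fix_G by auto
  show "?T (restr S (\<lambda>v. v (A i))) = restr S' (\<lambda>v. v (A i))" for i
    unfolding restr_def using \<psi> fix_A by auto
qed

lemma rational_on_lagrange_weight:
  assumes "\<And>j. rational_on S (\<lambda>v. x v j)"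
  shows "rational_on S (\<lambda>v. lagrange_weight r (x v) k)"
  unfolding lagrange_weight_def by (intro rational_on_prod rational_on_diff assms) auto

lemma rational_on_nodal_deriv:
  assumes inj: "\<And>v. v \<in> S \<Longrightarrow> inj_on (x v) {..r}" and x: "\<And>j. rational_on S (\<lambda>v. x v j)" and k: "k \<le> r"
  shows "rational_on S (\<lambda>v. nodal_deriv r (x v) i k)"
  unfolding nodal_deriv_def poly_pderiv_lagrange_basis
  by (intro rational_on_divide rational_on_sum rational_on_prod rational_on_diff x rational_on_lagrange_weight)
    (auto simp: lagrange_weight_nonzero[OF inj k])

lemma rational_on_lax_mat:
  assumes inj: "\<And>v. v \<in> S \<Longrightarrow> inj_on (x v) {..r}" and x: "\<And>j. rational_on S (\<lambda>v. x v j)"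
    and p: "\<And>j. rational_on S (\<lambda>v. p v j)" and ik: "i < Suc r" "k < Suc r"
  shows "rational_on S (\<lambda>v. lax_mat r (x v) (p v) $$ (i,k))"
proof -
  have "rational_on S (\<lambda>v. (if i = k then p v i else 0) - nodal_deriv r (x v) i k)"
    using ik by (intro rational_on_diff rational_on_if p rational_on_const rational_on_nodal_deriv[OF inj x]) auto
  then show ?thesis using ik by (simp add: lax_mat_def)
qed

lemma rational_on_spectral_proj:
  assumes X: "\<And>v. X v \<in> carrier_mat n n"
    and rX: "\<And>k l. k < n \<Longrightarrow> l < n \<Longrightarrow> rational_on S (\<lambda>v. X v $$ (k,l))"
    and a: "\<And>j. rational_on S (\<lambda>v. a v j)"
    and inj: "\<And>v. v \<in> S \<Longrightarrow> inj_on (a v) {..<n}" and i: "i < n"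
  shows "m \<le> n \<Longrightarrow> k < n \<Longrightarrow> l < n \<Longrightarrow> rational_on S (\<lambda>v. spectral_proj n (X v) (a v) i m $$ (k,l))"
proof (induction m arbitrary: k l)
  case 0
  then show ?case by (simp add: rational_on_const)
next
  case (Suc m)
  show ?case
  proof (cases "m = i")
    case True
    then show ?thesis using Suc by simp
  next
    case False
    have nz: "a v i - a v m \<noteq> 0" if "v \<in> S" for v
      using inj_onD[OF inj[OF that], of i m] i Suc.prems(1) False by auto
    have "rational_on S (\<lambda>v. 1 / (a v i - a v m) *
        ((\<Sum>t<n. X v $$ (k,t) * spectral_proj n (X v) (a v) i m $$ (t,l)) -
         a v m * spectral_proj n (X v) (a v) i m $$ (k,l)))"
      using Suc nz
      by (intro rational_on_mult rational_on_divide rational_on_diff rational_on_sum rational_on_const a rX Suc.IH)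
        auto
    then show ?thesis
      using False Suc.prems by (simp add: index_spectral_proj_step[OF X spectral_proj_carrier[OF X]])
  qed
qed

lemma rational_on_dual_momenta:
  assumes inj: "\<And>v. v \<in> S \<Longrightarrow> inj_on (x v) {..r} \<and> inj_on (a v) {..r}"
    and x: "\<And>j. rational_on S (\<lambda>v. x v j)" and p: "\<And>j. rational_on S (\<lambda>v. p v j)"
    and a: "\<And>j. rational_on S (\<lambda>v. a v j)"
  shows "rational_on S (\<lambda>v. dual_momenta r (x v) (p v) (a v) i)"
proof (cases "i \<le> r")
  case True
  have "rational_on S (\<lambda>v. spectral_proj (Suc r) (lax_mat r (x v) (p v)) (a v) i (Suc r) $$ (k,k))"
    if "k \<le> r" for k
    by (rule rational_on_spectral_proj[OF lax_mat_carrier rational_on_lax_mat[OF _ x p] a])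
      (use inj that True in \<open>auto simp: lessThan_Suc_atMost\<close>)
  then have "rational_on S (\<lambda>v. (\<Sum>k\<le>r. x v k * spectral_proj (Suc r) (lax_mat r (x v) (p v)) (a v) i (Suc r) $$ (k,k))
      + nodal_deriv r (a v) i i)"
    using inj True by (intro rational_on_add rational_on_sum rational_on_mult x rational_on_nodal_deriv[OF _ a]) auto
  then show ?thesis using True by (simp add: dual_momenta_def)
qed (simp add: dual_momenta_def rational_on_const)

lemma rational_on_dual_momenta_coords:
  assumes "\<And>v. v \<in> S \<Longrightarrow> inj_on (\<lambda>j. v (X j)) {..r} \<and> inj_on (\<lambda>j. v (Z j)) {..r}"
  shows "rational_on S (\<lambda>v. dual_momenta r (\<lambda>j. v (X j)) (\<lambda>j. v (P j)) (\<lambda>j. v (Z j)) i)"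
  by (rule rational_on_dual_momenta) (use assms in \<open>auto simp: rational_on_coord\<close>)

section \<open>The duality map\<close>

definition swap_GA :: "(var \<Rightarrow> complex) \<Rightarrow> var \<Rightarrow> complex" where
  "swap_GA v = (\<lambda>k. case k of G i \<Rightarrow> v (A i) | P i \<Rightarrow> v (P i) | A i \<Rightarrow> v (G i))"

definition dual_point :: "nat \<Rightarrow> (var \<Rightarrow> complex) \<Rightarrow> var \<Rightarrow> complex" where
  "dual_point r v = (\<lambda>k. case k of
      G i \<Rightarrow> v (G i)
    | P i \<Rightarrow> dual_momenta r (\<lambda>j. v (G j)) (\<lambda>j. v (P j)) (\<lambda>j. v (A j)) i
    | A i \<Rightarrow> v (A i))"

lemma swap_GA_simps [simp]: "swap_GA v (G i) = v (A i)" "swap_GA v (P i) = v (P i)" "swap_GA v (A i) = v (G i)"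
  by (simp_all add: swap_GA_def)

lemma dual_point_simps [simp]:
  "dual_point r v (G i) = v (G i)" "dual_point r v (A i) = v (A i)"
  "dual_point r v (P i) = dual_momenta r (\<lambda>j. v (G j)) (\<lambda>j. v (P j)) (\<lambda>j. v (A j)) i"
  by (simp_all add: dual_point_def)

lemma swap_GA_swap_GA [simp]: "swap_GA (swap_GA v) = v"
proof
  fix k show "swap_GA (swap_GA v) k = v k" by (cases k) simp_all
qed

lemma swap_GA_in_rOp_iff: "swap_GA w \<in> rOp r \<longleftrightarrow> w \<in> rOp_dual r"
proof -
  have "(\<forall>k. \<not> used_var r k \<longrightarrow> swap_GA w k = 0) \<longleftrightarrow> (\<forall>k. \<not> used_var r k \<longrightarrow> w k = 0)"
  proof (intro iffI allI impI)
    fix k assume "\<forall>k. \<not> used_var r k \<longrightarrow> swap_GA w k = 0" "\<not> used_var r k"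
    then show "w k = 0" by (cases k) (metis swap_GA_simps used_var.simps)+
  next
    fix k assume "\<forall>k. \<not> used_var r k \<longrightarrow> w k = 0" "\<not> used_var r k"
    then show "swap_GA w k = 0" by (cases k) (metis swap_GA_simps used_var.simps)+
  qed
  then show ?thesis unfolding rOp_def rOp_dual_def by auto
qed

lemma dual_point_in_rOp_dual:
  assumes v: "v \<in> rOp r"
  shows "dual_point r v \<in> rOp_dual r"
proof -
  have unused: "\<And>k. \<not> used_var r k \<Longrightarrow> v k = 0" and inj: "inj_on (\<lambda>i. v (G i)) {..r}" "inj_on (\<lambda>i. v (A i)) {..r}"
    and W: "Wr r (\<lambda>i. v (G i)) (\<lambda>i. v (P i)) (\<lambda>i. v (A i))"
    using v unfolding rOp_def by auto
  have "\<not> used_var r k \<Longrightarrow> dual_point r v k = 0" for k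
    using unused by (cases k) (auto simp: dual_momenta_def)
  then show ?thesis
    unfolding rOp_dual_def using inj dual_momenta_duality(1)[OF inj W] by auto
qed

lemma dual_point_swap_GA_dual_point:
  assumes v: "v \<in> rOp r"
  shows "dual_point r (swap_GA (dual_point r v)) = swap_GA v"
proof
  have unused: "\<And>k. \<not> used_var r k \<Longrightarrow> v k = 0" and inj: "inj_on (\<lambda>i. v (G i)) {..r}" "inj_on (\<lambda>i. v (A i)) {..r}"
    and W: "Wr r (\<lambda>i. v (G i)) (\<lambda>i. v (P i)) (\<lambda>i. v (A i))"
    using v unfolding rOp_def by auto
  fix k show "dual_point r (swap_GA (dual_point r v)) k = swap_GA v k"
  proof (cases k)
    case (P i)
    show ?thesis
    proof (cases "i \<le> r")
      case True
      then show ?thesis using P dual_momenta_duality(2)[OF inj W True] by simp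
    next
      case False
      then show ?thesis using P unused[of "P i"] by (simp add: dual_momenta_def)
    qed
  qed simp_all
qed

theorem mainTheorem7:
  fixes r :: nat
  assumes "r \<ge> 1"
  shows "\<exists>T. Fun_iso (rOp r) (rOp_dual r) T r"
proof -
  let ?\<psi> = "\<lambda>w. swap_GA (dual_point r (swap_GA w))"
  have "Fun_iso (rOp r) (rOp_dual r) (\<lambda>f. restr (rOp_dual r) (\<lambda>w. f (?\<psi> w))) r"
  proof (rule Fun_iso_of_birational)
    show "dual_point r v \<in> rOp_dual r" if "v \<in> rOp r" for v
      using dual_point_in_rOp_dual[OF that] .
    show "?\<psi> w \<in> rOp r" if "w \<in> rOp_dual r" for w
      using dual_point_in_rOp_dual[of "swap_GA w" r] that by (simp add: swap_GA_in_rOp_iff)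
    show "?\<psi> (dual_point r v) = v" if "v \<in> rOp r" for v
      using dual_point_swap_GA_dual_point[OF that] by simp
    show "dual_point r (?\<psi> w) = w" if "w \<in> rOp_dual r" for w
      using dual_point_swap_GA_dual_point[of "swap_GA w" r] that by (simp add: swap_GA_in_rOp_iff)
    show "rational_on (rOp r) (\<lambda>v. dual_point r v k)" for k
      by (cases k) (auto simp: rational_on_coord rOp_def intro!: rational_on_dual_momenta_coords)
    show "rational_on (rOp_dual r) (\<lambda>w. ?\<psi> w k)" for k
      by (cases k) (auto simp: rational_on_coord rOp_dual_def intro!: rational_on_dual_momenta_coords)
  qed simp_all
  then show ?thesis by blast
qed

end
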